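(* Let $\theta$ be a skew-merged permutation. Then the length of a longest increasing subsequence of $\theta$ equals the number of elements of type SW plus the number of elements of type NE plus the length of a longest increasing subsequence of the set of central elements of $\theta$ (which is the number of central elements if they form an increasing sequence, $1$ if they form a decreasing sequence of length at least one, and $0$ if there are none).
   Context: Permutations are identified with their sets of points $(i,\sigma(i))$ with the usual left/right/above/below relations. A skew-merged permutation is one whose points can be partitioned into an increasing and a decreasing subsequence. An element is of type NE if it plays the $3$ in an occurrence of $213$, NW if it plays the $3$ in an occurrence of $312$, SW if it plays the $1$ in an occurrence of $132$, SE if it plays the $1$ in an occurrence of $231$, and central otherwise. The central elements of a skew-merged permutation form a monotone sequence. *)

theory Defs
  imports Main
begin

text \<open>A permutation of length n is a bijection f of {..<n}; its points are (i, f i).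
  Positions are compared by <, values by <.\<close>

definition is_perm :: "nat \<Rightarrow> (nat \<Rightarrow> nat) \<Rightarrow> bool" where
  "is_perm n f \<longleftrightarrow> bij_betw f {..<n} {..<n}"

definition incr_on :: "(nat \<Rightarrow> nat) \<Rightarrow> nat set \<Rightarrow> bool" where
  "incr_on f S \<longleftrightarrow> (\<forall>i\<in>S. \<forall>j\<in>S. i < j \<longrightarrow> f i < f j)"

definition decr_on :: "(nat \<Rightarrow> nat) \<Rightarrow> nat set \<Rightarrow> bool" where
  "decr_on f S \<longleftrightarrow> (\<forall>i\<in>S. \<forall>j\<in>S. i < j \<longrightarrow> f i > f j)"

definition skew_merged :: "nat \<Rightarrow> (nat \<Rightarrow> nat) \<Rightarrow> bool" where
  "skew_merged n f \<longleftrightarrow> is_perm n f \<and>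
     (\<exists>I D. I \<union> D = {..<n} \<and> I \<inter> D = {} \<and> incr_on f I \<and> decr_on f D)"

definition is_NE :: "nat \<Rightarrow> (nat \<Rightarrow> nat) \<Rightarrow> nat \<Rightarrow> bool" where
  "is_NE n f x \<longleftrightarrow> (\<exists>a b. a < b \<and> b < x \<and> x < n \<and> f b < f a \<and> f a < f x)"

definition is_NW :: "nat \<Rightarrow> (nat \<Rightarrow> nat) \<Rightarrow> nat \<Rightarrow> bool" where
  "is_NW n f x \<longleftrightarrow> (\<exists>b c. x < b \<and> b < c \<and> c < n \<and> f b < f c \<and> f c < f x)"

definition is_SW :: "nat \<Rightarrow> (nat \<Rightarrow> nat) \<Rightarrow> nat \<Rightarrow> bool" where
  "is_SW n f x \<longleftrightarrow> (\<exists>b c. x < b \<and> b < c \<and> c < n \<and> f x < f c \<and> f c < f b)"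

definition is_SE :: "nat \<Rightarrow> (nat \<Rightarrow> nat) \<Rightarrow> nat \<Rightarrow> bool" where
  "is_SE n f x \<longleftrightarrow> (\<exists>a b. a < b \<and> b < x \<and> x < n \<and> f x < f a \<and> f a < f b)"

definition central_set :: "nat \<Rightarrow> (nat \<Rightarrow> nat) \<Rightarrow> nat set" where
  "central_set n f = {x. x < n \<and> \<not> is_NE n f x \<and> \<not> is_NW n f x \<and>
                          \<not> is_SW n f x \<and> \<not> is_SE n f x}"

definition lis_on :: "(nat \<Rightarrow> nat) \<Rightarrow> nat set \<Rightarrow> nat" where
  "lis_on f A = Max {card S | S. S \<subseteq> A \<and> incr_on f S}"

end

theory Submission imports Defs begin

text \<open>Split the permutation into an increasing part I and a decreasing part D. SW and NE
  elements lie in I, NW and SE elements do not, and every SW (NE) element lies south-west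
  (north-east) of every central element. So the SW and NE elements together with a longest
  increasing subsequence of the central elements form an increasing subsequence. Conversely, an
  increasing subsequence S has at most one element outside I. If S contains an NW or SE element d,
  some element of I is incomparable with d and thus missing from S, whence |S| \<le> |I|, and I
  consists of SW, NE and increasing central elements; otherwise S itself consists of such
  elements.\<close>

lemma incr_onD: "incr_on f S \<Longrightarrow> i \<in> S \<Longrightarrow> j \<in> S \<Longrightarrow> i < j \<Longrightarrow> f i < f j"
  unfolding incr_on_def by blast

lemma decr_onD: "decr_on f S \<Longrightarrow> i \<in> S \<Longrightarrow> j \<in> S \<Longrightarrow> i < j \<Longrightarrow> f j < f i"
  unfolding decr_on_def by blast

lemma incr_on_subset: "incr_on f S \<Longrightarrow> T \<subseteq> S \<Longrightarrow> incr_on f T"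
  unfolding incr_on_def by blast

lemma incr_on_Un:
  assumes "incr_on f A" "incr_on f B"
    and "\<And>a b. a \<in> A \<Longrightarrow> b \<in> B \<Longrightarrow> a < b \<and> f a < f b \<or> b < a \<and> f b < f a"
  shows "incr_on f (A \<union> B)"
  unfolding incr_on_def
proof (intro ballI impI)
  fix i j assume "i \<in> A \<union> B" "j \<in> A \<union> B" "i < j"
  then show "f i < f j"
    using assms incr_onD[OF assms(1)] incr_onD[OF assms(2)] by (auto dest: order.asym)
qed

lemma finite_lis_candidates: "finite A \<Longrightarrow> finite {card S | S. S \<subseteq> A \<and> incr_on f S}"
  by (rule finite_subset[of _ "card ` Pow A"]) auto

lemma card_le_lis_on:
  assumes "finite A" "S \<subseteq> A" "incr_on f S"
  shows "card S \<le> lis_on f A"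
  unfolding lis_on_def using assms by (blast intro: Max_ge finite_lis_candidates)

lemma lis_on_attained:
  assumes "finite A"
  obtains S where "S \<subseteq> A" "incr_on f S" "card S = lis_on f A"
proof -
  have "incr_on f {}" by (simp add: incr_on_def)
  then have "card {} \<in> {card S | S. S \<subseteq> A \<and> incr_on f S}" by (auto intro!: exI[of _ "{}"])
  then have "lis_on f A \<in> {card S | S. S \<subseteq> A \<and> incr_on f S}"
    unfolding lis_on_def using finite_lis_candidates[OF assms] by (intro Max_in) auto
  then show ?thesis using that by auto
qed

lemma card_incr_le_card_plus_lis:
  assumes "finite X" "finite C" "incr_on f S" "S \<subseteq> X \<union> C"
  shows "card S \<le> card X + lis_on f C"
proof -
  have "card S \<le> card (X \<union> (S \<inter> C))"
    using assms by (intro card_mono) auto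
  also have "\<dots> \<le> card X + card (S \<inter> C)"
    by (rule card_Un_le)
  also have "card (S \<inter> C) \<le> lis_on f C"
    using assms by (intro card_le_lis_on) (auto intro: incr_on_subset[OF assms(3)])
  finally show ?thesis by simp
qed

lemma SW_below_central:
  assumes inj: "inj_on f {..<n}" and "is_SW n f x" and "m \<in> central_set n f"
  shows "x < m \<and> f x < f m"
proof -
  obtain b c where h: "x < b" "b < c" "c < n" "f x < f c" "f c < f b"
    using assms(2) unfolding is_SW_def by blast
  have m: "m < n" "\<not> is_NW n f m" "\<not> is_SW n f m" "\<not> is_SE n f m"
    using assms(3) unfolding central_set_def by auto
  have "x < m"
  proof (rule ccontr)
    assume "\<not> x < m"
    then have "m < x" using m(3) assms(2) by (cases "m = x") auto
    then have "m < b" "m \<noteq> c" using h by simp_all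
    then have "f m \<noteq> f c" using inj_on_contraD[OF inj] m(1) h(3) by blast
    moreover have "\<not> f c < f m"
      using m(2) \<open>m < x\<close> h unfolding is_NW_def by (metis order.strict_trans)
    moreover have "\<not> f m < f c"
      using m(3) \<open>m < b\<close> h unfolding is_SW_def by metis
    ultimately show False by simp
  qed
  moreover have "f x < f m"
  proof (rule ccontr)
    assume "\<not> f x < f m"
    then have "f m < f x" using inj_on_contraD[OF inj, of x m] m(1) \<open>x < m\<close> by simp
    then have "m \<noteq> b" using h by auto
    moreover have "\<not> m < b"
      using m(3) \<open>f m < f x\<close> h unfolding is_SW_def by (metis order.strict_trans)
    moreover have "\<not> b < m"
      using m(1,4) \<open>f m < f x\<close> h unfolding is_SE_def by (metis order.strict_trans)
    ultimately show False by simp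
  qed
  ultimately show ?thesis ..
qed

lemma NE_above_central:
  assumes inj: "inj_on f {..<n}" and "is_NE n f x" and "m \<in> central_set n f"
  shows "m < x \<and> f m < f x"
proof -
  obtain a b where h: "a < b" "b < x" "x < n" "f b < f a" "f a < f x"
    using assms(2) unfolding is_NE_def by blast
  have m: "m < n" "\<not> is_NE n f m" "\<not> is_NW n f m" "\<not> is_SE n f m"
    using assms(3) unfolding central_set_def by auto
  have "m < x"
  proof (rule ccontr)
    assume "\<not> m < x"
    then have "x < m" using m(2) assms(2) by (cases "m = x") auto
    then have "b < m" "a \<noteq> m" using h by simp_all
    then have "f m \<noteq> f a" using inj_on_contraD[OF inj, of m a] m(1) h by simp
    moreover have "\<not> f a < f m"
      using m(1,2) \<open>b < m\<close> h unfolding is_NE_def by metis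
    moreover have "\<not> f m < f a"
      using m(1,4) \<open>x < m\<close> h unfolding is_SE_def by (metis order.strict_trans)
    ultimately show False by simp
  qed
  moreover have "f m < f x"
  proof (rule ccontr)
    assume "\<not> f m < f x"
    then have "f x < f m" using inj_on_contraD[OF inj, of x m] m(1) h(3) \<open>m < x\<close> by simp
    then have "m \<noteq> b" using h by auto
    moreover have "\<not> b < m"
      using m(1,2) \<open>f x < f m\<close> h unfolding is_NE_def by (metis order.strict_trans)
    moreover have "\<not> m < b"
      using m(3) \<open>f x < f m\<close> h unfolding is_NW_def by (metis order.strict_trans)
    ultimately show False by simp
  qed
  ultimately show ?thesis ..
qed

locale skew_merged_split =
  fixes n :: nat and f :: "nat \<Rightarrow> nat" and I D :: "nat set"
  assumes inj: "inj_on f {..<n}"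
    and cover: "I \<union> D = {..<n}"
    and incr: "incr_on f I"
    and decr: "decr_on f D"
begin

abbreviation "SWs \<equiv> {x. x < n \<and> is_SW n f x}"
abbreviation "NEs \<equiv> {x. x < n \<and> is_NE n f x}"
abbreviation "Cs \<equiv> central_set n f"

lemma in_incr_part: "x < n \<Longrightarrow> x \<notin> D \<Longrightarrow> x \<in> I"
  using cover by auto

lemma in_decr_part: "x < n \<Longrightarrow> x \<notin> I \<Longrightarrow> x \<in> D"
  using cover by auto

lemma finite_incr_part: "finite I"
  using cover by (metis finite_Un finite_lessThan)

lemma finite_central: "finite Cs"
  unfolding central_set_def by simp

lemma ascent_meets_incr_part: "x < y \<Longrightarrow> y < n \<Longrightarrow> f x < f y \<Longrightarrow> x \<in> I \<or> y \<in> I"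
  using decr_onD[OF decr, of x y] in_incr_part[of x] in_incr_part[of y] by fastforce

lemma descent_meets_decr_part: "x < y \<Longrightarrow> y < n \<Longrightarrow> f y < f x \<Longrightarrow> x \<in> D \<or> y \<in> D"
  using incr_onD[OF incr, of x y] in_decr_part[of x] in_decr_part[of y] by fastforce

lemma SW_in_incr_part:
  assumes "is_SW n f x" shows "x \<in> I"
proof (rule ccontr)
  assume "x \<notin> I"
  obtain b c where h: "x < b" "b < c" "c < n" "f x < f c" "f c < f b"
    using assms unfolding is_SW_def by blast
  have "c \<in> I" using ascent_meets_incr_part[of x c] \<open>x \<notin> I\<close> h by simp
  moreover have "b \<in> I" using ascent_meets_incr_part[of x b] \<open>x \<notin> I\<close> h by simp
  ultimately show False using incr_onD[OF incr, of b c] h by simp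
qed

lemma NE_in_incr_part:
  assumes "is_NE n f x" shows "x \<in> I"
proof (rule ccontr)
  assume "x \<notin> I"
  obtain a b where h: "a < b" "b < x" "x < n" "f b < f a" "f a < f x"
    using assms unfolding is_NE_def by blast
  have "a \<in> I" using ascent_meets_incr_part[of a x] \<open>x \<notin> I\<close> h by simp
  moreover have "b \<in> I" using ascent_meets_incr_part[of b x] \<open>x \<notin> I\<close> h by simp
  ultimately show False using incr_onD[OF incr, of a b] h by simp
qed

lemma NW_notin_incr_part:
  assumes "is_NW n f x" shows "x \<notin> I"
proof
  assume "x \<in> I"
  obtain b c where h: "x < b" "b < c" "c < n" "f b < f c" "f c < f x"
    using assms unfolding is_NW_def by blast
  have "b \<in> D" "c \<in> D"
    using incr_onD[OF incr \<open>x \<in> I\<close>, of b] incr_onD[OF incr \<open>x \<in> I\<close>, of c] in_decr_part h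
    by (meson order.strict_trans order.asym)+
  then show False using decr_onD[OF decr, of b c] h by simp
qed

lemma SE_notin_incr_part:
  assumes "is_SE n f x" shows "x \<notin> I"
proof
  assume "x \<in> I"
  obtain a b where h: "a < b" "b < x" "x < n" "f x < f a" "f a < f b"
    using assms unfolding is_SE_def by blast
  have "a \<in> D" "b \<in> D"
    using incr_onD[OF incr _ \<open>x \<in> I\<close>, of a] incr_onD[OF incr _ \<open>x \<in> I\<close>, of b] in_decr_part h
    by (meson order.strict_trans order.asym)+
  then show False using decr_onD[OF decr, of a b] h by simp
qed

lemma NW_incr_witness:
  assumes "is_NW n f x" obtains e where "e \<in> I" "x < e" "f e < f x"
proof -
  obtain b c where h: "x < b" "b < c" "c < n" "f b < f c" "f c < f x"
    using assms unfolding is_NW_def by blast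
  have "b \<in> I \<or> c \<in> I" using ascent_meets_incr_part[of b c] h by simp
  moreover have "f b < f x" "x < c" using h by simp_all
  ultimately show ?thesis using that h by blast
qed

lemma SE_incr_witness:
  assumes "is_SE n f x" obtains e where "e \<in> I" "e < x" "f x < f e"
proof -
  obtain a b where h: "a < b" "b < x" "x < n" "f x < f a" "f a < f b"
    using assms unfolding is_SE_def by blast
  have "a \<in> I \<or> b \<in> I" using ascent_meets_incr_part[of a b] h by simp
  moreover have "f x < f b" "a < x" using h by simp_all
  ultimately show ?thesis using that h by blast
qed


text \<open>An SW element has an element of D to its south-east, an NE element has one to its
  north-west; the two cannot coexist since D is decreasing.\<close>

lemma not_SW_and_NE:
  assumes "is_SW n f x" "is_NE n f x" shows False
proof -
  obtain b c where h: "x < b" "b < c" "c < n" "f x < f c" "f c < f b"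
    using assms(1) unfolding is_SW_def by blast
  obtain a b' where g: "a < b'" "b' < x" "f b' < f a" "f a < f x"
    using assms(2) unfolding is_NE_def by blast
  have "a \<in> D \<or> b' \<in> D" using descent_meets_decr_part[of a b'] g h by simp
  then obtain p where p: "p \<in> D" "p < x" "f p < f x"
  proof
    assume "a \<in> D" then show ?thesis using that g by simp
  next
    assume "b' \<in> D" then show ?thesis using that g by simp
  qed
  have "b \<in> D \<or> c \<in> D" using descent_meets_decr_part[of b c] h by simp
  then obtain q where q: "q \<in> D" "x < q" "f x < f q"
  proof
    assume "b \<in> D" then show ?thesis using that h by simp
  next
    assume "c \<in> D" then show ?thesis using that h by simp
  qed
  show False using decr_onD[OF decr p(1) q(1)] p q by simp
qed

lemma card_incr_minus_incr_part_le_1: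
  assumes "S \<subseteq> {..<n}" "incr_on f S"
  shows "card (S - I) \<le> 1"
proof -
  have "p = q" if "p \<in> S - I" "q \<in> S - I" for p q
  proof (rule ccontr)
    assume "p \<noteq> q"
    have "p \<in> D" "q \<in> D" using that assms(1) in_decr_part by auto
    then show False
      using \<open>p \<noteq> q\<close> that incr_onD[OF assms(2), of p q] incr_onD[OF assms(2), of q p]
        decr_onD[OF decr, of p q] decr_onD[OF decr, of q p]
      by (auto simp: neq_iff)
  qed
  then show ?thesis
    using finite_subset[OF assms(1)] card_le_Suc0_iff_eq[of "S - I"] by auto
qed

lemma card_incr_part_le: "card I \<le> card SWs + card NEs + lis_on f Cs"
proof -
  have "I \<subseteq> (SWs \<union> NEs) \<union> Cs"
    using cover NW_notin_incr_part SE_notin_incr_part unfolding central_set_def by blast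
  then have "card I \<le> card (SWs \<union> NEs) + lis_on f Cs"
    by (intro card_incr_le_card_plus_lis finite_central incr) auto
  then show ?thesis using card_Un_le[of SWs NEs] by linarith
qed

lemma lis_on_lower_bound: "card SWs + card NEs + lis_on f Cs \<le> lis_on f {..<n}"
proof -
  obtain M where M: "M \<subseteq> Cs" "incr_on f M" "card M = lis_on f Cs"
    using lis_on_attained[OF finite_central] by blast
  have M_central: "x < n \<and> \<not> is_SW n f x \<and> \<not> is_NE n f x" if "x \<in> M" for x
    using M(1) that unfolding central_set_def by blast
  have "incr_on f (M \<union> (SWs \<union> NEs))"
  proof (rule incr_on_Un[OF M(2)])
    show "incr_on f (SWs \<union> NEs)"
      using SW_in_incr_part NE_in_incr_part by (intro incr_on_subset[OF incr]) blast
    show "m < x \<and> f m < f x \<or> x < m \<and> f x < f m" if "m \<in> M" "x \<in> SWs \<union> NEs" for m x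
      using that M(1) SW_below_central[OF inj] NE_above_central[OF inj] by blast
  qed
  moreover have "M \<union> (SWs \<union> NEs) \<subseteq> {..<n}"
    using M_central by auto
  ultimately have "card (M \<union> (SWs \<union> NEs)) \<le> lis_on f {..<n}"
    by (intro card_le_lis_on) auto
  moreover have "card (M \<union> (SWs \<union> NEs)) = card M + (card SWs + card NEs)"
  proof -
    have "finite M" using M(1) finite_central by (rule finite_subset)
    then have "card (M \<union> (SWs \<union> NEs)) = card M + card (SWs \<union> NEs)"
      using M_central by (intro card_Un_disjoint) auto
    also have "card (SWs \<union> NEs) = card SWs + card NEs"
      using not_SW_and_NE by (intro card_Un_disjoint) auto
    finally show ?thesis .
  qed
  ultimately show ?thesis using M(3) by simp
qed

lemma card_incr_le:
  assumes S: "S \<subseteq> {..<n}" "incr_on f S"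
  shows "card S \<le> card SWs + card NEs + lis_on f Cs"
proof (cases "S \<subseteq> (SWs \<union> NEs) \<union> Cs")
  case True
  then have "card S \<le> card (SWs \<union> NEs) + lis_on f Cs"
    using S(2) finite_central by (intro card_incr_le_card_plus_lis) auto
  then show ?thesis using card_Un_le[of SWs NEs] by linarith
next
  case False
  then obtain d where d: "d \<in> S" "is_NW n f d \<or> is_SE n f d"
    using S(1) unfolding central_set_def by blast
  obtain e where e: "e \<in> I" "e \<notin> S"
    using d(2)
  proof
    assume "is_NW n f d"
    then obtain e where "e \<in> I" "d < e" "f e < f d" by (rule NW_incr_witness)
    then show ?thesis using that incr_onD[OF S(2) d(1), of e] by fastforce
  next
    assume "is_SE n f d"
    then obtain e where "e \<in> I" "e < d" "f d < f e" by (rule SE_incr_witness)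
    then show ?thesis using that incr_onD[OF S(2) _ d(1), of e] by fastforce
  qed
  have "card (S \<inter> I) < card I"
    using e finite_incr_part by (intro psubset_card_mono) auto
  moreover have "card S \<le> card (S \<inter> I) + card (S - I)"
    by (metis Int_Diff_Un card_Un_le)
  ultimately have "card S \<le> card I"
    using card_incr_minus_incr_part_le_1[OF S] by linarith
  then show ?thesis using card_incr_part_le by linarith
qed

lemma lis_on_eq: "lis_on f {..<n} = card SWs + card NEs + lis_on f Cs"
proof -
  obtain S where "S \<subseteq> {..<n}" "incr_on f S" "card S = lis_on f {..<n}"
    using lis_on_attained[of "{..<n}" f] by auto
  then show ?thesis using card_incr_le lis_on_lower_bound by (metis le_antisym)
qed

end

theorem mainTheorem11:
  fixes n :: nat and \<theta> :: "nat \<Rightarrow> nat"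
  assumes "skew_merged n \<theta>"
  shows "lis_on \<theta> {..<n} =
           card {x. x < n \<and> is_SW n \<theta> x} + card {x. x < n \<and> is_NE n \<theta> x}
           + lis_on \<theta> (central_set n \<theta>)"
proof -
  obtain I D where "is_perm n \<theta>" "I \<union> D = {..<n}" "incr_on \<theta> I" "decr_on \<theta> D"
    using assms unfolding skew_merged_def by blast
  then interpret skew_merged_split n \<theta> I D
    by unfold_locales (simp_all add: is_perm_def bij_betw_imp_inj_on)
  show ?thesis by (rule lis_on_eq)
qed

end
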